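(* Let $R$ be a $K$-ring with a degree function such that $R\neq K$. Then every connected component of the projective line $\mathbb{P}(R)$ has infinite diameter.
   Context: A ring $R$ (associative, with $1$, unit group $R^*$) is a $K$-ring with a degree function if $K:=R^*\cup\{0\}$ is a (not necessarily commutative) field and there is a function $\deg:R\to\{-\infty\}\cup\{0,1,2,\dots\}$ with: $\deg a=-\infty$ iff $a=0$; $\deg a=0$ iff $a\in R^*$; $\deg(a+b)\le\max\{\deg a,\deg b\}$; $\deg(ab)=\deg a+\deg b$, for all $a,b\in R$. A pair $(a,b)\in R^2$ is admissible if it is the first row of an invertible $2\times2$ matrix over $R$; $\mathbb{P}(R)$ is the set of cyclic submodules $R(a,b)$ of the left module $R^2$ with $(a,b)$ admissible. Two points $R(a,b)$, $R(c,d)$ are distant iff $\begin{pmatrix}a&b\\c&d\end{pmatrix}$ is invertible; connected components and diameter (supremum of path distances within a component) refer to the graph on $\mathbb{P}(R)$ whose edges are pairs of distant points. *)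

theory Defs
  imports Main
begin

definition unit_R :: "'a::ring_1 \<Rightarrow> bool" where
  "unit_R a \<longleftrightarrow> (\<exists>b. a * b = 1 \<and> b * a = 1)"

definition K_set :: "'a::ring_1 set" where
  "K_set = {a. unit_R a} \<union> {0}"

(* K is a (skew) field: a subring with 0 \<noteq> 1 (nonzero elements are invertible by construction) *)
definition K_is_field :: "'a::ring_1 itself \<Rightarrow> bool" where
  "K_is_field _ \<longleftrightarrow> (0::'a) \<noteq> 1 \<and>
     (\<forall>a\<in>(K_set::'a set). \<forall>b\<in>K_set. a + b \<in> K_set \<and> a * b \<in> K_set) \<and>
     (\<forall>a\<in>(K_set::'a set). - a \<in> K_set)"

(* Degree function; deg a for a = 0 stands for -\<infinity>, so the values deg 0 are irrelevant
   and the axioms are written out with the -\<infinity> cases resolved. *)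
definition degree_function :: "('a::ring_1 \<Rightarrow> nat) \<Rightarrow> bool" where
  "degree_function deg \<longleftrightarrow>
     (\<forall>a. a \<noteq> 0 \<longrightarrow> (deg a = 0 \<longleftrightarrow> unit_R a)) \<and>
     (\<forall>a b. a \<noteq> 0 \<longrightarrow> b \<noteq> 0 \<longrightarrow> a * b \<noteq> 0 \<and> deg (a * b) = deg a + deg b) \<and>
     (\<forall>a b. a \<noteq> 0 \<longrightarrow> b \<noteq> 0 \<longrightarrow> a + b \<noteq> 0 \<longrightarrow> deg (a + b) \<le> max (deg a) (deg b))"

definition K_ring_with_degree :: "('a::ring_1 \<Rightarrow> nat) \<Rightarrow> bool" where
  "K_ring_with_degree deg \<longleftrightarrow> K_is_field TYPE('a) \<and> degree_function deg"

definition invertible2 :: "'a::ring_1 \<Rightarrow> 'a \<Rightarrow> 'a \<Rightarrow> 'a \<Rightarrow> bool" where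
  "invertible2 a b c d \<longleftrightarrow> (\<exists>a' b' c' d'.
      a * a' + b * c' = 1 \<and> a * b' + b * d' = 0 \<and>
      c * a' + d * c' = 0 \<and> c * b' + d * d' = 1 \<and>
      a' * a + b' * c = 1 \<and> a' * b + b' * d = 0 \<and>
      c' * a + d' * c = 0 \<and> c' * b + d' * d = 1)"

definition admissible :: "'a::ring_1 \<Rightarrow> 'a \<Rightarrow> bool" where
  "admissible a b \<longleftrightarrow> (\<exists>c d. invertible2 a b c d)"

definition cyc :: "'a::ring_1 \<Rightarrow> 'a \<Rightarrow> ('a \<times> 'a) set" where
  "cyc a b = {(r * a, r * b) | r. True}"

definition proj_line :: "('a::ring_1 \<times> 'a) set set" where
  "proj_line = {cyc a b | a b. admissible a b}"

definition distant :: "('a::ring_1 \<times> 'a) set \<Rightarrow> ('a \<times> 'a) set \<Rightarrow> bool" where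
  "distant p q \<longleftrightarrow> (\<exists>a b c d. p = cyc a b \<and> q = cyc c d \<and> invertible2 a b c d)"

definition components :: "('a::ring_1 \<times> 'a) set set set" where
  "components = {{q. distant\<^sup>*\<^sup>* p q} | p. p \<in> proj_line}"

end

theory Submission
  imports Defs
begin

text \<open>Invertible 2\<times>2 matrices, acting on row vectors from the right, are automorphisms of the
distant graph, and they act transitively on \<open>\<bbbP>(R)\<close>; so it suffices to find points arbitrarily far
from \<open>R(1,0)\<close> in its component. The neighbours of \<open>R(1,0)\<close> are the points \<open>R(y,-1)\<close>, hence a
point at distance \<open>k\<close> is the first row point of a product \<open>E(y\<^sub>1)\<cdots>E(y\<^sub>k)\<close> with
\<open>E(y) = [[y,-1],[1,0]]\<close>. A letter that is \<open>0\<close> or a unit can be removed together with its successor,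
at the price of at most one step, so every point at distance \<open>\<le> k\<close> comes from a word of length \<open>\<le> k\<close>
all of whose letters except the last lie outside \<open>K\<close>. For such words the degree of the first row
entries behaves like a continued fraction expansion, and the expansion is unique (Euclidean
division with respect to \<open>deg\<close>). Thus for \<open>t \<notin> K\<close> the first row point of \<open>E(t)\<^sup>n\<close> has distance
exactly \<open>n\<close> from \<open>R(1,0)\<close>.\<close>

fun mat_mult :: "'a::ring_1 \<times> 'a \<times> 'a \<times> 'a \<Rightarrow> 'a \<times> 'a \<times> 'a \<times> 'a \<Rightarrow> 'a \<times> 'a \<times> 'a \<times> 'a" where
  "mat_mult (a, b, c, d) (e, f, g, h) = (a*e + b*g, a*f + b*h, c*e + d*g, c*f + d*h)"

definition mat_one :: "'a::ring_1 \<times> 'a \<times> 'a \<times> 'a" where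
  "mat_one = (1, 0, 0, 1)"

definition mat_invertible :: "'a::ring_1 \<times> 'a \<times> 'a \<times> 'a \<Rightarrow> bool" where
  "mat_invertible M \<longleftrightarrow> (\<exists>N. mat_mult M N = mat_one \<and> mat_mult N M = mat_one)"

lemma mat_mult_assoc: "mat_mult (mat_mult A B) C = mat_mult A (mat_mult B C)"
  by (cases A rule: prod_cases4; cases B rule: prod_cases4; cases C rule: prod_cases4)
     (simp add: algebra_simps)

lemma mat_mult_one [simp]: "mat_mult M mat_one = M" "mat_mult mat_one M = M"
  by (cases M rule: prod_cases4; simp add: mat_one_def)+

lemma mat_invertible_one: "mat_invertible mat_one"
  unfolding mat_invertible_def by auto

lemma mat_invertible_mult: "mat_invertible A \<Longrightarrow> mat_invertible B \<Longrightarrow> mat_invertible (mat_mult A B)"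
  unfolding mat_invertible_def by (metis mat_mult_assoc mat_mult_one)

lemma mat_invertible_inverse:
  assumes "mat_invertible M"
  obtains N where "mat_invertible N" "mat_mult M N = mat_one" "mat_mult N M = mat_one"
  using assms unfolding mat_invertible_def by blast

lemma invertible2_iff_mat_invertible: "invertible2 a b c d \<longleftrightarrow> mat_invertible (a, b, c, d)"
  unfolding invertible2_def mat_invertible_def mat_one_def by simp

lemma mat_invertible_rows_nonzero:
  "mat_invertible (a, b, c, d) \<Longrightarrow> (a, b) \<noteq> (0, 0) \<and> (c, d) \<noteq> (0, 0)"
  unfolding mat_invertible_def mat_one_def by (auto simp: split_paired_Ex)

lemma mat_invertible_row_op:
  assumes "mat_invertible (a, b, c, d)" "unit_R u"
  shows "mat_invertible (a, b, k*a + u*c, k*b + u*d)"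
proof -
  obtain v where "u*v = 1" "v*u = 1" using assms(2) unfolding unit_R_def by blast
  then have "mat_invertible (1, 0, k, u)"
    unfolding mat_invertible_def mat_one_def
    by (intro exI[of _ "(1, 0, -(v*k), v)"]) (simp add: mult.assoc[symmetric])
  from mat_invertible_mult[OF this assms(1)] show ?thesis by simp
qed

lemma unit_R_uminus: "unit_R u \<Longrightarrow> unit_R (-u)"
  unfolding unit_R_def by (metis minus_mult_minus)

lemma unit_R_nonzero: "unit_R u \<Longrightarrow> u \<noteq> 0"
  unfolding unit_R_def by auto

lemma mem_cyc: "(x, y) \<in> cyc a b \<longleftrightarrow> (\<exists>r. x = r*a \<and> y = r*b)"
  unfolding cyc_def by auto

lemma self_mem_cyc: "(a, b) \<in> cyc a b"
  unfolding mem_cyc by (intro exI[of _ 1]) simp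

lemma cyc_eq_range: "cyc a b = range (\<lambda>r. (r*a, r*b))"
  unfolding cyc_def by auto

lemma cyc_mono: "(a', b') \<in> cyc a b \<Longrightarrow> cyc a' b' \<subseteq> cyc a b"
  unfolding mem_cyc cyc_eq_range by (auto simp: image_iff mult.assoc[symmetric])

lemma cyc_unit_mult:
  assumes "unit_R u"
  shows "cyc (u*a) (u*b) = cyc a b"
proof
  obtain v where "v*u = 1" using assms unfolding unit_R_def by blast
  then have "a = v*(u*a)" "b = v*(u*b)" by (simp_all flip: mult.assoc)
  then show "cyc a b \<subseteq> cyc (u*a) (u*b)" by (metis cyc_mono mem_cyc)
qed (metis cyc_mono mem_cyc)

lemma distant_cyc_row_op:
  "mat_invertible (a, b, c, d) \<Longrightarrow> unit_R u \<Longrightarrow> distant (cyc a b) (cyc (k*a + u*c) (k*b + u*d))"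
  unfolding distant_def invertible2_iff_mat_invertible by (blast intro: mat_invertible_row_op)

definition mat_act :: "'a::ring_1 \<times> 'a \<times> 'a \<times> 'a \<Rightarrow> ('a \<times> 'a) set \<Rightarrow> ('a \<times> 'a) set" where
  "mat_act N S = (case N of (n1, n2, n3, n4) \<Rightarrow> (\<lambda>(x, y). (x*n1 + y*n3, x*n2 + y*n4)) ` S)"

lemma mat_act_cyc: "mat_act (n1, n2, n3, n4) (cyc a b) = cyc (a*n1 + b*n3) (a*n2 + b*n4)"
  unfolding mat_act_def cyc_eq_range by (simp add: image_image algebra_simps)

lemma mat_act_mult: "mat_act N (mat_act M S) = mat_act (mat_mult M N) S"
  by (cases M rule: prod_cases4; cases N rule: prod_cases4)
     (simp add: mat_act_def image_image case_prod_beta algebra_simps)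

lemma mat_act_one [simp]: "mat_act mat_one S = S"
  by (simp add: mat_act_def mat_one_def case_prod_beta)

lemma distant_mat_act:
  assumes "mat_invertible N" "distant p q"
  shows "distant (mat_act N p) (mat_act N q)"
proof -
  obtain a b c d where pq: "p = cyc a b" "q = cyc c d" "mat_invertible (a, b, c, d)"
    using assms(2) unfolding distant_def invertible2_iff_mat_invertible by blast
  obtain n1 n2 n3 n4 where N: "N = (n1, n2, n3, n4)" by (cases N rule: prod_cases4)
  have "mat_invertible (mat_mult (a, b, c, d) N)"
    using mat_invertible_mult pq(3) assms(1) by blast
  then show ?thesis unfolding distant_def invertible2_iff_mat_invertible N pq mat_act_cyc by auto
qed

lemma relpowp_distant_mat_act:
  "mat_invertible N \<Longrightarrow> (distant ^^ k) p q \<Longrightarrow> (distant ^^ k) (mat_act N p) (mat_act N q)"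
proof (induction k arbitrary: q)
  case (Suc k)
  then obtain r where "(distant ^^ k) p r" "distant r q" by (auto elim: relpowp_Suc_E)
  with Suc show ?case by (metis distant_mat_act relpowp_Suc_I)
qed simp

lemma relpowp_distant_mat_act_iff:
  assumes "mat_invertible M"
  shows "(distant ^^ k) (mat_act M p) (mat_act M q) \<longleftrightarrow> (distant ^^ k) p q"
proof
  obtain N where "mat_invertible N" "mat_mult M N = mat_one"
    using assms by (rule mat_invertible_inverse)
  then show "(distant ^^ k) p q" if "(distant ^^ k) (mat_act M p) (mat_act M q)"
    using relpowp_distant_mat_act[OF _ that] by (fastforce simp: mat_act_mult)
qed (rule relpowp_distant_mat_act[OF assms])

fun cont_mat :: "'a::ring_1 list \<Rightarrow> 'a \<times> 'a \<times> 'a \<times> 'a" where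
  "cont_mat [] = mat_one"
| "cont_mat (y # ys) = mat_mult (y, -1, 1, 0) (cont_mat ys)"

fun row_point :: "'a::ring_1 \<times> 'a \<times> 'a \<times> 'a \<Rightarrow> ('a \<times> 'a) set" where
  "row_point (a, b, c, d) = cyc a b"

lemma cont_mat_snoc: "cont_mat (ys @ [y]) = mat_mult (cont_mat ys) (y, -1, 1, 0)"
  by (induction ys) (simp_all add: mat_mult_assoc)

lemma mat_invertible_cont_mat: "mat_invertible (cont_mat ys)"
proof (induction ys)
  case (Cons y ys)
  have "mat_invertible (y, -1, 1, 0)"
    unfolding mat_invertible_def mat_one_def by (intro exI[of _ "(0, 1, -1, y)"]) simp
  with Cons show ?case by (simp add: mat_invertible_mult)
qed (simp add: mat_invertible_one)

lemma cont_mat_first_row_nonzero: "cont_mat ys = (a, b, c, d) \<Longrightarrow> (a, b) \<noteq> (0, 0)"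
  using mat_invertible_rows_nonzero mat_invertible_cont_mat by metis

lemma row_point_eq_mat_act: "row_point M = mat_act M (cyc 1 0)"
  by (cases M rule: prod_cases4) (simp add: mat_act_cyc)

lemma row_point_cont_mat_Cons: "row_point (cont_mat (y # ys)) = mat_act (cont_mat ys) (cyc y (-1))"
  by (cases "cont_mat ys" rule: prod_cases4) (simp add: mat_act_cyc)

lemma row_point_cont_mat_Cons_zero: "row_point (cont_mat (0 # y # ys)) = row_point (cont_mat ys)"
  using cyc_unit_mult[OF unit_R_uminus[of 1]]
  by (cases "cont_mat ys" rule: prod_cases4) (simp add: unit_R_def)

lemma distant_row_point_cont_mat_Cons_unit:
  assumes "unit_R u"
  shows "distant (row_point (cont_mat ys)) (row_point (cont_mat (u # y # ys)))"
proof -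
  obtain a b c d where M: "cont_mat ys = (a, b, c, d)" by (cases "cont_mat ys" rule: prod_cases4)
  have "distant (cyc a b) (cyc ((u*y - 1)*a + (-u)*c) ((u*y - 1)*b + (-u)*d))"
    using mat_invertible_cont_mat[of ys] M by (intro distant_cyc_row_op unit_R_uminus assms) simp
  then show ?thesis using M by (simp add: algebra_simps)
qed

lemma relpowp_distant_row_point_cont_mat: "(distant ^^ length ys) (cyc 1 0) (row_point (cont_mat ys))"
proof (induction ys)
  case Nil
  then show ?case by (simp add: mat_one_def)
next
  case (Cons y ys)
  obtain a b c d where M: "cont_mat ys = (a, b, c, d)" by (cases "cont_mat ys" rule: prod_cases4)
  have "distant (cyc a b) (cyc (y*a + (-1)*c) (y*b + (-1)*d))"
    using mat_invertible_cont_mat[of ys] M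
    by (intro distant_cyc_row_op unit_R_uminus) (simp_all add: unit_R_def)
  with Cons M show ?case by (auto intro: relpowp_Suc_I)
qed

definition nonconstant :: "'a::ring_1 \<Rightarrow> bool" where
  "nonconstant x \<longleftrightarrow> x \<noteq> 0 \<and> \<not> unit_R x"

definition reduced :: "'a::ring_1 list \<Rightarrow> bool" where
  "reduced ys \<longleftrightarrow> (\<forall>y \<in> set (butlast ys). nonconstant y)"

lemma reduced_Nil [simp]: "reduced []"
  by (simp add: reduced_def)

lemma reduced_Cons: "reduced (y # ys) \<longleftrightarrow> ys = [] \<or> nonconstant y \<and> reduced ys"
  by (cases ys) (auto simp: reduced_def)

lemma reduced_snoc: "reduced (ys @ [y]) \<longleftrightarrow> (\<forall>x \<in> set ys. nonconstant x)"
  by (simp add: reduced_def)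

lemma reduced_if_nonconstant: "\<forall>y \<in> set ys. nonconstant y \<Longrightarrow> reduced ys"
  by (auto simp: reduced_def dest: in_set_butlastD)

locale degree_ring =
  fixes deg :: "'a::ring_1 \<Rightarrow> nat"
  assumes degree_function: "degree_function deg"
begin

lemma mult_nonzero: "(a::'a) \<noteq> 0 \<Longrightarrow> b \<noteq> 0 \<Longrightarrow> a*b \<noteq> 0"
  using degree_function unfolding degree_function_def by auto

lemma deg_mult: "a \<noteq> 0 \<Longrightarrow> b \<noteq> 0 \<Longrightarrow> deg (a*b) = deg a + deg b"
  using degree_function unfolding degree_function_def by blast

lemma deg_add_le: "a \<noteq> 0 \<Longrightarrow> b \<noteq> 0 \<Longrightarrow> a + b \<noteq> 0 \<Longrightarrow> deg (a + b) \<le> max (deg a) (deg b)"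
  using degree_function unfolding degree_function_def by blast

lemma deg_eq_0_iff: "a \<noteq> 0 \<Longrightarrow> deg a = 0 \<longleftrightarrow> unit_R a"
  using degree_function unfolding degree_function_def by blast

lemma deg_unit: "unit_R u \<Longrightarrow> deg u = 0"
  using deg_eq_0_iff unit_R_nonzero by blast

lemma deg_unit_mult: "unit_R u \<Longrightarrow> a \<noteq> 0 \<Longrightarrow> deg (u*a) = deg a"
  by (simp add: deg_mult deg_unit unit_R_nonzero)

lemma deg_uminus: "deg (-a) = deg a"
  using deg_unit_mult[of "-1" a] unit_R_uminus[of 1] by (cases "a = 0") (auto simp: unit_R_def)

lemma deg_nonconstant: "nonconstant x \<Longrightarrow> deg x \<ge> 1"
  unfolding nonconstant_def using deg_eq_0_iff by fastforce

lemma deg_add_dominant: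
  assumes "a \<noteq> 0" "b = 0 \<or> deg b < deg a"
  shows "a + b \<noteq> 0 \<and> deg (a + b) = deg a"
proof (cases "b = 0")
  case False
  with assms have lt: "deg b < deg a" by simp
  have nz: "a + b \<noteq> 0"
    using lt deg_uminus by (metis add_eq_0_iff less_irrefl)
  have "deg (a + b) \<le> max (deg a) (deg b)"
    using deg_add_le assms(1) False nz by blast
  moreover have "deg ((a + b) + -b) \<le> max (deg (a + b)) (deg (-b))"
    using deg_add_le[of "a + b" "-b"] nz False assms(1) by simp
  ultimately show ?thesis using nz lt deg_uminus by simp
qed (use assms in simp)

lemma deg_diff_less:
  assumes "x = 0 \<or> deg x < D" "y = 0 \<or> deg y < D"
  shows "x - y = 0 \<or> deg (x - y) < D"
  using assms deg_add_le[of x "-y"] deg_uminus by (cases "x = 0 \<or> y = 0") fastforce+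

lemma deg_remainder_unique:
  assumes "a \<noteq> 0" "b = 0 \<or> deg b < deg a" "b' = 0 \<or> deg b' < deg a"
    and "a*z + b' = a*t + b"
  shows "z = t \<and> b' = b"
proof -
  have quotient: "a*(z - t) = b - b'"
    using assms(4) by (simp add: algebra_simps)
  have "z = t"
  proof (rule ccontr)
    assume "z \<noteq> t"
    then have "z - t \<noteq> 0" by simp
    then have "a*(z - t) \<noteq> 0" "deg (a*(z - t)) \<ge> deg a"
      using mult_nonzero deg_mult assms(1) by auto
    with quotient deg_diff_less[OF assms(2,3)] show False by auto
  qed
  with quotient show ?thesis by simp
qed

lemma cont_mat_first_row_dominant:
  assumes "\<forall>y \<in> set ys. nonconstant y" "cont_mat ys = (a, b, c, d)"
  shows "a \<noteq> 0 \<and> (b = 0 \<or> deg b < deg a)"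
  using assms
proof (induction ys arbitrary: a b c d rule: rev_induct)
  case (snoc y ys)
  obtain a' b' c' d' where M: "cont_mat ys = (a', b', c', d')" by (cases "cont_mat ys" rule: prod_cases4)
  with snoc have IH: "a' \<noteq> 0 \<and> (b' = 0 \<or> deg b' < deg a')" by simp
  have y: "y \<noteq> 0" "deg y \<ge> 1" using snoc.prems deg_nonconstant by (auto simp: nonconstant_def)
  have ab: "a = a'*y + b'" "b = -a'" using snoc.prems(2) M by (simp_all add: cont_mat_snoc)
  have "a'*y \<noteq> 0" "deg (a'*y) = deg a' + deg y" using mult_nonzero deg_mult IH y by auto
  moreover from this have "a'*y + b' \<noteq> 0 \<and> deg (a'*y + b') = deg (a'*y)"
    using IH y by (intro deg_add_dominant) auto
  ultimately show ?case using ab IH y deg_uminus by auto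
qed (simp add: mat_one_def)

lemma cyc_eq_imp_unit_mult:
  assumes "cyc (a::'a) b = cyc c d" "(a, b) \<noteq> (0, 0)" "(c, d) \<noteq> (0, 0)"
  obtains u where "unit_R u" "c = u*a" "d = u*b"
proof -
  have "(c, d) \<in> cyc a b" "(a, b) \<in> cyc c d" using assms(1) self_mem_cyc by metis+
  then obtain r s where r: "c = r*a" "d = r*b" and s: "a = s*c" "b = s*d" unfolding mem_cyc by blast
  have "(1 - s*r)*a = 0" "(1 - s*r)*b = 0" using r s by (simp_all add: algebra_simps)
  with assms(2) mult_nonzero have "s*r = 1" by (metis prod.inject right_minus_eq)
  have "(1 - r*s)*c = 0" "(1 - r*s)*d = 0" using r s by (simp_all add: algebra_simps)
  with assms(3) mult_nonzero have "r*s = 1" by (metis prod.inject right_minus_eq)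
  with \<open>s*r = 1\<close> r show ?thesis using that unfolding unit_R_def by blast
qed

lemma mat_invertible_lower_imp_unit_R:
  assumes "mat_invertible ((s::'a), 0, c, d)" "s \<noteq> 0"
  shows "unit_R d"
proof -
  obtain x1 x2 x3 x4 where X: "mat_mult (s, 0, c, d) (x1, x2, x3, x4) = mat_one"
    "mat_mult (x1, x2, x3, x4) (s, 0, c, d) = mat_one"
    using assms(1) unfolding mat_invertible_def by (auto simp: split_paired_Ex)
  then have "s*x2 = 0" "c*x2 + d*x4 = 1" "x4*d = 1" by (simp_all add: mat_one_def)
  with assms(2) mult_nonzero have "x2 = 0" by blast
  with \<open>c*x2 + d*x4 = 1\<close> have "d*x4 = 1" by simp
  with \<open>x4*d = 1\<close> show ?thesis unfolding unit_R_def by blast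
qed

lemma distant_base_point_imp:
  assumes "distant (cyc (1::'a) 0) P"
  obtains y where "P = cyc y (-1)"
proof -
  obtain a b c d where e: "cyc 1 0 = cyc a b" "P = cyc c d" and inv: "mat_invertible (a, b, c, d)"
    using assms unfolding distant_def invertible2_iff_mat_invertible by blast
  have "(a, b) \<in> cyc 1 0" using e(1) self_mem_cyc by metis
  then have "b = 0" unfolding mem_cyc by auto
  moreover from this inv have "a \<noteq> 0" using mat_invertible_rows_nonzero by blast
  ultimately have "unit_R d" using inv mat_invertible_lower_imp_unit_R by blast
  then have "unit_R (-d)" by (rule unit_R_uminus)
  obtain v where "d*v = 1" using \<open>unit_R d\<close> unfolding unit_R_def by blast
  then have "P = cyc ((-d)*(-(v*c))) ((-d)*(-1))" using e(2) by (simp add: mult.assoc[symmetric])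
  then show ?thesis using that cyc_unit_mult[OF \<open>unit_R (-d)\<close>] by metis
qed

lemma distant_row_point_cont_mat_imp:
  assumes "distant (row_point (cont_mat (ys::'a list))) P"
  obtains y where "P = row_point (cont_mat (y # ys))"
proof -
  obtain N where N: "mat_invertible N" "mat_mult (cont_mat ys) N = mat_one" "mat_mult N (cont_mat ys) = mat_one"
    using mat_invertible_cont_mat by (rule mat_invertible_inverse)
  have "distant (mat_act N (row_point (cont_mat ys))) (mat_act N P)"
    using distant_mat_act[OF N(1) assms] .
  then have "distant (cyc 1 0) (mat_act N P)"
    by (simp add: row_point_eq_mat_act mat_act_mult N(2))
  then obtain y where "mat_act N P = cyc y (-1)" by (rule distant_base_point_imp)
  then have "P = mat_act (cont_mat ys) (cyc y (-1))"
    by (metis N(3) mat_act_mult mat_act_one)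
  then show ?thesis using that row_point_cont_mat_Cons by metis
qed

lemma distant_reduced_row_point:
  "reduced ys \<Longrightarrow> distant (row_point (cont_mat (ys::'a list))) P \<Longrightarrow>
    \<exists>zs. reduced zs \<and> length zs \<le> Suc (length ys) \<and> P = row_point (cont_mat zs)"
proof (induction "length ys" arbitrary: ys P rule: less_induct)
  case less
  obtain y where P: "P = row_point (cont_mat (y # ys))"
    using less.prems(2) by (rule distant_row_point_cont_mat_imp)
  show ?case
  proof (cases "ys = [] \<or> nonconstant y")
    case True
    with less.prems(1) P show ?thesis by (intro exI[of _ "y # ys"]) (auto simp: reduced_Cons)
  next
    case False
    then obtain y' ys' where ys: "ys = y' # ys'" and "y = 0 \<or> unit_R y"
      unfolding nonconstant_def by (cases ys) auto
    have "reduced ys'" using less.prems(1) ys by (auto simp: reduced_Cons)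
    from \<open>y = 0 \<or> unit_R y\<close> show ?thesis
    proof
      assume "y = 0"
      then have "P = row_point (cont_mat ys')" using P ys row_point_cont_mat_Cons_zero by simp
      with \<open>reduced ys'\<close> ys show ?thesis by (intro exI[of _ ys']) simp
    next
      assume "unit_R y"
      then have "distant (row_point (cont_mat ys')) P"
        using P ys distant_row_point_cont_mat_Cons_unit by simp
      with less.hyps[of ys'] \<open>reduced ys'\<close> ys show ?thesis by force
    qed
  qed
qed

lemma relpowp_distant_base_imp_reduced:
  assumes "(distant ^^ k) (cyc (1::'a) 0) P"
  obtains zs where "reduced zs" "length zs \<le> k" "P = row_point (cont_mat zs)"
  using assms
proof (induction k arbitrary: P thesis)
  case 0
  then have "P = row_point (cont_mat [])" by (simp add: mat_one_def)
  with 0 show ?case by (metis reduced_Nil le0 list.size(3))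
next
  case (Suc k)
  from Suc.prems(2) obtain Q where "(distant ^^ k) (cyc 1 0) Q" "distant Q P" by (rule relpowp_Suc_E)
  with Suc.IH obtain zs where "reduced zs" "length zs \<le> k" "Q = row_point (cont_mat zs)" by blast
  with \<open>distant Q P\<close> show ?case using Suc.prems(1) distant_reduced_row_point
    by (metis Suc_le_mono le_trans)
qed

lemma row_point_cont_mat_snoc_ne_base:
  assumes "\<forall>w \<in> set ws. nonconstant w"
  shows "row_point (cont_mat (ws @ [t])) \<noteq> cyc (1::'a) 0"
proof
  obtain A B C D where W: "cont_mat ws = (A, B, C, D)" by (cases "cont_mat ws" rule: prod_cases4)
  assume "row_point (cont_mat (ws @ [t])) = cyc 1 0"
  moreover have M: "cont_mat (ws @ [t]) = (A*t + B, -A, C*t + D, -C)"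
    using W by (simp add: cont_mat_snoc)
  ultimately have eq: "cyc 1 0 = cyc (A*t + B) (-A)" by simp
  have "(A*t + B, -A) \<noteq> (0, 0)" using cont_mat_first_row_nonzero[OF M] .
  then obtain u where "-A = u*0" using cyc_eq_imp_unit_mult[OF eq] by fastforce
  with cont_mat_first_row_dominant[OF assms W] show False by simp
qed

lemma row_point_cont_mat_snoc_cancel:
  assumes "\<forall>w \<in> set ws. nonconstant w" "\<forall>x \<in> set xs. nonconstant x"
    and "row_point (cont_mat (xs @ [z])) = row_point (cont_mat ((ws::'a list) @ [t]))"
  shows "row_point (cont_mat xs) = row_point (cont_mat ws)"
proof -
  obtain A B C D where W: "cont_mat ws = (A, B, C, D)" by (cases "cont_mat ws" rule: prod_cases4)
  obtain \<alpha> \<beta> \<gamma> \<delta> where X: "cont_mat xs = (\<alpha>, \<beta>, \<gamma>, \<delta>)" by (cases "cont_mat xs" rule: prod_cases4)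
  have dom: "A \<noteq> 0" "B = 0 \<or> deg B < deg A" using cont_mat_first_row_dominant[OF assms(1) W] by auto
  have domX: "\<beta> = 0 \<or> deg \<beta> < deg \<alpha>" using cont_mat_first_row_dominant[OF assms(2) X] by simp
  have "cyc (A*t + B) (-A) = cyc (\<alpha>*z + \<beta>) (-\<alpha>)"
    using assms(3) W X by (simp add: cont_mat_snoc)
  then obtain u where u: "unit_R u" "\<alpha>*z + \<beta> = u*(A*t + B)" "-\<alpha> = u*(-A)"
    using cont_mat_first_row_nonzero[of "ws @ [t]"] cont_mat_first_row_nonzero[of "xs @ [z]"] W X
    by (auto simp: cont_mat_snoc elim: cyc_eq_imp_unit_mult)
  then have \<alpha>: "\<alpha> = u*A" by simp
  have "deg (u*A) = deg A" using u(1) dom(1) deg_unit_mult by blast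
  moreover have "u*A \<noteq> 0" using u(1) dom(1) unit_R_nonzero mult_nonzero by blast
  moreover have "u*B = 0 \<or> deg (u*B) < deg A" using dom(2) u(1) deg_unit_mult by (cases "B = 0") auto
  moreover have "(u*A)*z + \<beta> = (u*A)*t + u*B" using u(2) \<alpha> by (simp add: algebra_simps)
  ultimately have "\<beta> = u*B" using deg_remainder_unique domX \<alpha> by metis
  then show ?thesis using X W \<alpha> cyc_unit_mult[OF u(1)] by simp
qed

lemma length_le_if_row_point_cont_mat_eq:
  "\<forall>w \<in> set ws. nonconstant w \<Longrightarrow> reduced zs \<Longrightarrow>
    row_point (cont_mat zs) = row_point (cont_mat (ws::'a list)) \<Longrightarrow> length ws \<le> length zs"
proof (induction ws arbitrary: zs rule: rev_induct)
  case (snoc t ws)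
  show ?case
  proof (cases zs rule: rev_exhaust)
    case Nil
    have "row_point (cont_mat (ws @ [t])) \<noteq> cyc 1 0"
      using snoc.prems(1) by (intro row_point_cont_mat_snoc_ne_base) simp
    with snoc.prems(3) Nil show ?thesis by (simp add: mat_one_def)
  next
    case zs: (snoc xs z)
    then have xs: "\<forall>x \<in> set xs. nonconstant x" using snoc.prems(2) by (simp add: reduced_snoc)
    have "row_point (cont_mat xs) = row_point (cont_mat ws)"
      using row_point_cont_mat_snoc_cancel[of ws xs z t] snoc.prems(1,3) zs xs by simp
    with snoc.IH[OF _ reduced_if_nonconstant[OF xs]] snoc.prems(1) zs show ?thesis by simp
  qed
qed simp

lemma not_relpowp_distant_base_point:
  assumes "\<forall>w \<in> set ws. nonconstant w" "k < length ws"
  shows "\<not> (distant ^^ k) (cyc (1::'a) 0) (row_point (cont_mat ws))"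
proof
  assume "(distant ^^ k) (cyc 1 0) (row_point (cont_mat ws))"
  then obtain zs where "reduced zs" "length zs \<le> k" "row_point (cont_mat ws) = row_point (cont_mat zs)"
    by (rule relpowp_distant_base_imp_reduced)
  then have "length ws \<le> length zs" using length_le_if_row_point_cont_mat_eq[OF assms(1)] by simp
  with \<open>length zs \<le> k\<close> assms(2) show False by simp
qed

end

theorem mainTheorem11:
  fixes deg :: "'a::ring_1 \<Rightarrow> nat"
  assumes "K_ring_with_degree deg"
    and "(K_set :: 'a set) \<noteq> UNIV"
  shows "\<forall>C \<in> (components :: ('a \<times> 'a) set set set). \<forall>n::nat.
           \<exists>p\<in>C. \<exists>q\<in>C. \<not> (\<exists>k\<le>n. (distant ^^ k) p q)"
proof (intro ballI allI)
  interpret degree_ring deg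
    using assms(1) by unfold_locales (simp add: K_ring_with_degree_def)
  obtain t :: 'a where t: "nonconstant t"
    using assms(2) unfolding K_set_def nonconstant_def by auto
  fix C :: "('a \<times> 'a) set set" and n :: nat
  assume "C \<in> components"
  then obtain a b c d where C: "C = {q. distant\<^sup>*\<^sup>* (cyc a b) q}" and M: "mat_invertible (a, b, c, d)"
    unfolding components_def proj_line_def admissible_def invertible2_iff_mat_invertible by blast
  define ws where "ws = replicate (Suc n) t"
  define q where "q = mat_act (a, b, c, d) (row_point (cont_mat ws))"
  have dist: "(distant ^^ k) (cyc a b) q \<longleftrightarrow> (distant ^^ k) (cyc 1 0) (row_point (cont_mat ws))" for k
    using relpowp_distant_mat_act_iff[OF M] row_point_eq_mat_act[of "(a, b, c, d)"] by (simp add: q_def)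
  have "(distant ^^ length ws) (cyc a b) q"
    using dist relpowp_distant_row_point_cont_mat by blast
  then have "q \<in> C" unfolding C by (simp add: relpowp_imp_rtranclp)
  moreover have "\<not> (distant ^^ k) (cyc a b) q" if "k \<le> n" for k
    using that dist not_relpowp_distant_base_point[of ws k] t by (simp add: ws_def)
  ultimately show "\<exists>p\<in>C. \<exists>q\<in>C. \<not> (\<exists>k\<le>n. (distant ^^ k) p q)"
    using C by blast
qed

end
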